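(* Let $q\in\mathbb{C}$ with $0<|q|<1$, and let $a,b,c,d,e$ be complex numbers such that at least one of $a$, $b$, $c$ is of the form $q^n$ with $n\in\{1,2,\ldots\}$ (and such that all terms below are well defined). Then \[ \sum_{k=-\infty}^\infty \frac{(q/a,q/b,q/c,q/d,q/e)_k}{(a,bq,cq,dq,eq)_k}(abcdeq^{-1})^k =\frac{(q,ab,bc,ac)_\infty}{(a,bq,cq,abc/q)_\infty} \sum_{k=0}^\infty\frac{(q/a,q/b,q/c,de)_k}{(q,q^2/abc,dq,eq)_k}q^k. \]
   Context: For an integer $n$, the $q$-shifted factorial is $(a)_n=(a;q)_n$ with $(a)_0=1$, $(a)_n=(1-a)(1-aq)\cdots(1-aq^{n-1})$ for $n\ge1$, and $(a)_n=[(1-aq^{-1})(1-aq^{-2})\cdots(1-aq^{n})]^{-1}$ for $n\le -1$. Also $(a_1,\ldots,a_m)_n=(a_1)_n\cdots(a_m)_n$ and $(a_1,\ldots,a_m)_\infty=\lim_{n\to\infty}(a_1,\ldots,a_m)_n$. *)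

theory Defs
  imports "HOL-Analysis.Analysis"
begin

definition qpoch :: "complex \<Rightarrow> complex \<Rightarrow> int \<Rightarrow> complex" where
  "qpoch a q n =
     (if 0 \<le> n then (\<Prod>i<nat n. 1 - a * q ^ i)
      else inverse (\<Prod>i\<in>{1..nat (- n)}. 1 - a / q ^ i))"

definition qpinf :: "complex \<Rightarrow> complex \<Rightarrow> complex" where
  "qpinf a q = lim (\<lambda>n::nat. qpoch a q (int n))"

end

theory Submission
  imports Defs
begin

text \<open>If one of \<open>a\<close>, \<open>b\<close>, \<open>c\<close> equals \<open>q^(N+1)\<close>, the bilateral series terminates on both
  sides: its terms vanish outside \<open>-N-1 \<le> k \<le> N\<close>. Pairing the terms \<open>k\<close> and \<open>-k-1\<close> turns it
  into a terminating very-well-poised series with base parameter \<open>q\<close>, and Watson's transformation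
  carries that into the terminating balanced series on the right, the infinite products collapsing
  to the finite prefactor of Watson's formula. Watson's transformation is proved by expanding one
  well-poised pair with the \<open>q\<close>-Pfaff-Saalschuetz sum, exchanging the two summations and
  evaluating the inner sums by a terminating very-well-poised summation; both summation formulas
  follow by creative telescoping from explicit Zeilberger certificates.\<close>

definition qpoch_nat :: "complex \<Rightarrow> complex \<Rightarrow> nat \<Rightarrow> complex" where
  "qpoch_nat a q n = (\<Prod>i<n. 1 - a * q ^ i)"

lemma qpoch_of_nat: "qpoch a q (int n) = qpoch_nat a q n"
  by (simp add: qpoch_def qpoch_nat_def)

lemma qpoch_nat_0 [simp]: "qpoch_nat a q 0 = 1"
  by (simp add: qpoch_nat_def)

lemma qpoch_nat_Suc: "qpoch_nat a q (Suc n) = qpoch_nat a q n * (1 - a * q ^ n)"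
  by (simp add: qpoch_nat_def)

lemma qpoch_nat_Suc_shift: "qpoch_nat a q (Suc n) = (1 - a) * qpoch_nat (a * q) q n"
  by (induction n) (simp_all add: qpoch_nat_Suc mult.assoc mult.left_commute power_commutes)

lemma qpoch_nat_mult_q: "qpoch_nat a q n * (1 - a * q ^ n) = (1 - a) * qpoch_nat (a * q) q n"
  by (simp flip: qpoch_nat_Suc qpoch_nat_Suc_shift)

lemma qpoch_nat_div_q:
  assumes "q \<noteq> 0"
  shows "qpoch_nat (a / q) q n * (q - a * q ^ n) = (q - a) * qpoch_nat a q n"
proof -
  have "qpoch_nat (a / q) q n * (1 - a / q * q ^ n) = (1 - a / q) * qpoch_nat a q n"
    using qpoch_nat_mult_q[of "a / q" q n] assms by simp
  then show ?thesis
    using assms by (simp add: field_simps)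
qed

lemma qpoch_nat_inv_power_Suc:
  assumes "q \<noteq> 0"
  shows "qpoch_nat (1 / q ^ Suc m) q n * (q * q ^ m - q ^ n) = (q * q ^ m - 1) * qpoch_nat (1 / q ^ m) q n"
proof -
  have "qpoch_nat (1 / q ^ Suc m) q n * (q * q ^ m - q ^ n)
      = qpoch_nat (1 / q ^ m / q) q n * (q - 1 / q ^ m * q ^ n) * q ^ m"
    using assms by (simp add: field_simps)
  also have "\<dots> = (q - 1 / q ^ m) * qpoch_nat (1 / q ^ m) q n * q ^ m"
    by (simp only: qpoch_nat_div_q[OF assms])
  also have "\<dots> = (q * q ^ m - 1) * qpoch_nat (1 / q ^ m) q n"
    using assms by (simp add: field_simps)
  finally show ?thesis .
qed

lemma qpoch_nat_add: "qpoch_nat a q (m + n) = qpoch_nat a q m * qpoch_nat (a * q ^ m) q n"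
  by (induction n) (simp_all add: qpoch_nat_Suc power_add mult.assoc)

lemma qpoch_nat_eq_0: "a * q ^ m = 1 \<Longrightarrow> m < n \<Longrightarrow> qpoch_nat a q n = 0"
  unfolding qpoch_nat_def by (rule prod_zero) auto

lemma qpoch_nat_terminates:
  assumes "q \<noteq> 0" "N < k"
  shows "qpoch_nat (1 / q ^ N) q k = 0"
  using assms by (intro qpoch_nat_eq_0[of _ q N]) auto

lemma qpoch_nat_nonzero: "(\<And>i. i < n \<Longrightarrow> a * q ^ i \<noteq> 1) \<Longrightarrow> qpoch_nat a q n \<noteq> 0"
  unfolding qpoch_nat_def by (auto simp: prod_zero_iff)

lemma qpoch_nat_shift_nonzero: "(\<And>i. a * q ^ Suc i \<noteq> 1) \<Longrightarrow> qpoch_nat (a * q) q n \<noteq> 0"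
  by (rule qpoch_nat_nonzero) (simp add: mult.assoc flip: power_Suc)

lemma qpoch_nat_reflect:
  assumes "q \<noteq> 0" "w \<noteq> 0"
  shows "qpoch_nat (w / q ^ n) q n * (\<Prod>i<n. q ^ Suc i) = (- w) ^ n * qpoch_nat (q / w) q n"
proof (induction n)
  case (Suc n)
  have "qpoch_nat (w / q ^ Suc n) q (Suc n) = (1 - w / q ^ Suc n) * qpoch_nat (w / q ^ n) q n"
    using assms(1) by (simp add: qpoch_nat_Suc_shift)
  then have "qpoch_nat (w / q ^ Suc n) q (Suc n) * (\<Prod>i<Suc n. q ^ Suc i)
      = ((1 - w / q ^ Suc n) * q ^ Suc n) * (qpoch_nat (w / q ^ n) q n * (\<Prod>i<n. q ^ Suc i))"
    by (simp add: ac_simps)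
  also have "(1 - w / q ^ Suc n) * q ^ Suc n = q ^ Suc n - w"
    using assms(1) by (simp add: field_simps)
  also have "(q ^ Suc n - w) * (qpoch_nat (w / q ^ n) q n * (\<Prod>i<n. q ^ Suc i))
      = (- w) ^ Suc n * qpoch_nat (q / w) q (Suc n)"
    unfolding Suc qpoch_nat_Suc using assms(2) by (simp add: field_simps)
  finally show ?case .
qed simp

lemma prod_power_Suc_square:
  fixes q :: "'a::comm_monoid_mult"
  shows "(\<Prod>i<n. q ^ Suc i) * (\<Prod>i<n. q ^ Suc i) = q ^ (n*n) * q ^ n"
proof (induction n)
  case (Suc n)
  have "(\<Prod>i<Suc n. q ^ Suc i) * (\<Prod>i<Suc n. q ^ Suc i)
      = ((\<Prod>i<n. q ^ Suc i) * (\<Prod>i<n. q ^ Suc i)) * (q ^ Suc n * q ^ Suc n)"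
    by (simp add: ac_simps)
  also have "\<dots> = q ^ (n*n + n + Suc n + Suc n)"
    unfolding Suc by (simp add: power_add ac_simps)
  also have "n*n + n + Suc n + Suc n = Suc n * Suc n + Suc n"
    by simp
  finally show ?case
    by (simp only: power_add)
qed simp

lemma qpoch_nat_reflected_product:
  assumes q0: "q \<noteq> 0" and z0: "z \<noteq> 0"
  shows "qpoch_nat (1/q^j) q j * qpoch_nat (q/(q^j*z)) q j * q^(j*j) * z^j = qpoch_nat q q j * qpoch_nat z q j"
proof -
  define Q where "Q = (\<Prod>i<j. q ^ Suc i)"
  have "Q \<noteq> 0"
    using q0 by (simp add: Q_def)
  have a: "qpoch_nat (1/q^j) q j * Q = (-1)^j * qpoch_nat q q j"
    using qpoch_nat_reflect[OF q0, of 1 j] by (simp add: Q_def)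
  have b: "qpoch_nat (q/(q^j*z)) q j * Q = (-(q/z))^j * qpoch_nat z q j"
    using qpoch_nat_reflect[OF q0, of "q/z" j] q0 z0 by (simp add: Q_def mult.commute)
  have sign: "(-1)^j * (-(q/z))^j * z^j = q^j"
    using z0 by (simp flip: power_mult_distrib)
  have "qpoch_nat (1/q^j) q j * qpoch_nat (q/(q^j*z)) q j * q^(j*j) * z^j * (Q * Q)
      = (qpoch_nat (1/q^j) q j * Q) * (qpoch_nat (q/(q^j*z)) q j * Q) * q^(j*j) * z^j"
    by (simp add: ac_simps)
  also have "\<dots> = qpoch_nat q q j * qpoch_nat z q j * (q^(j*j) * ((-1)^j * (-(q/z))^j * z^j))"
    unfolding a b by (simp add: ac_simps)
  also have "\<dots> = qpoch_nat q q j * qpoch_nat z q j * (Q * Q)"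
    unfolding sign Q_def prod_power_Suc_square ..
  finally show ?thesis
    using \<open>Q \<noteq> 0\<close> by simp
qed

lemma qpoch_nat_reverse:
  assumes "q \<noteq> 0"
  shows "(\<Prod>i\<in>{1..n}. 1 - a / q ^ i) = qpoch_nat (a / q ^ n) q n"
proof (induction n)
  case (Suc n)
  have "qpoch_nat (a / q ^ Suc n) q (Suc n) = (1 - a / q ^ Suc n) * qpoch_nat (a / q ^ n) q n"
    using assms by (simp add: qpoch_nat_Suc_shift)
  then show ?case
    using Suc by (simp add: prod.nat_ivl_Suc' mult.commute)
qed simp

lemma qpoch_neg:
  assumes "q \<noteq> 0" "a \<noteq> 0"
  shows "qpoch a q (- int n) = (\<Prod>i<n. q ^ Suc i) / ((- a) ^ n * qpoch_nat (q / a) q n)"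
proof -
  have "qpoch a q (- int n) = inverse (qpoch_nat (a / q ^ n) q n)"
    using qpoch_nat_reverse[OF assms(1)] by (cases "n = 0") (simp_all add: qpoch_def)
  also have "\<dots> = (\<Prod>i<n. q ^ Suc i) / (qpoch_nat (a / q ^ n) q n * (\<Prod>i<n. q ^ Suc i))"
    using assms(1) by (simp add: field_simps)
  finally show ?thesis
    unfolding qpoch_nat_reflect[OF assms] .
qed

definition admissible_base :: "complex \<Rightarrow> bool" where
  "admissible_base q \<longleftrightarrow> q \<noteq> 0 \<and> (\<forall>n>0. q ^ n \<noteq> 1)"

lemma admissible_base_nonzero: "admissible_base q \<Longrightarrow> q \<noteq> 0"
  by (simp add: admissible_base_def)

lemma admissible_base_power: "admissible_base q \<Longrightarrow> 0 < n \<Longrightarrow> q ^ n \<noteq> 1"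
  by (simp add: admissible_base_def)

lemma admissible_base_if_norm:
  assumes "0 < norm q" "norm q < 1"
  shows "admissible_base q"
  unfolding admissible_base_def
proof safe
  fix n :: nat assume "0 < n" "q ^ n = 1"
  moreover have "norm (q ^ n) < 1" if "0 < n"
    using that assms(2) by (simp add: norm_power power_less_one_iff)
  ultimately show False by simp
qed (use assms in simp)

lemma qpoch_nat_power_nonzero: "admissible_base q \<Longrightarrow> 0 < m \<Longrightarrow> qpoch_nat (q ^ m) q n \<noteq> 0"
  by (rule qpoch_nat_nonzero) (metis add_gr_0 power_add admissible_base_power)

section \<open>The \<open>q\<close>-Pfaff-Saalschuetz sum\<close>

lemma creative_telescoping:
  fixes F :: "nat \<Rightarrow> nat \<Rightarrow> 'a::comm_ring"
  assumes "\<And>j. F (Suc n) j * \<alpha> - F n j * \<beta> = G (Suc j) - G j"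
    and "G 0 = 0" "G (Suc (Suc n)) = 0" "F n (Suc n) = 0"
  shows "(\<Sum>j\<le>Suc n. F (Suc n) j) * \<alpha> = (\<Sum>j\<le>n. F n j) * \<beta>"
proof -
  have "(\<Sum>j\<le>Suc n. F (Suc n) j) * \<alpha> - (\<Sum>j\<le>Suc n. F n j) * \<beta>
      = (\<Sum>j<Suc (Suc n). F (Suc n) j * \<alpha> - F n j * \<beta>)"
    by (simp add: sum_subtractf sum_distrib_right lessThan_Suc_atMost distrib_right)
  also have "\<dots> = 0"
    using assms(2,3) by (simp only: assms(1) sum_lessThan_telescope) simp
  finally show ?thesis
    using assms(4) by simp
qed

definition wp_pair :: "complex \<Rightarrow> complex \<Rightarrow> complex \<Rightarrow> nat \<Rightarrow> complex" where
  "wp_pair q x y k =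
     qpoch_nat (q/x) q k * qpoch_nat (q/y) q k * (x*y)^k / (qpoch_nat (x*q) q k * qpoch_nat (y*q) q k)"

definition saalschuetz_term :: "complex \<Rightarrow> complex \<Rightarrow> complex \<Rightarrow> nat \<Rightarrow> nat \<Rightarrow> complex" where
  "saalschuetz_term q d e k j =
     qpoch_nat (1/q^k) q j * qpoch_nat (q^(k+1)) q j * qpoch_nat (d*e) q j * q^j
     / (qpoch_nat q q j * qpoch_nat (d*q) q j * qpoch_nat (e*q) q j)"

text \<open>Zeilberger certificate: it turns the first-order recurrence in \<open>k\<close> of the sum into a
  termwise telescoping difference in \<open>j\<close>.\<close>
definition saalschuetz_cert :: "complex \<Rightarrow> complex \<Rightarrow> complex \<Rightarrow> nat \<Rightarrow> nat \<Rightarrow> complex" where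
  "saalschuetz_cert q d e k j = (case j of 0 \<Rightarrow> 0 | Suc i \<Rightarrow>
     (1+q*q^k)*(1-d*e*q^i)*(q^i-q*q^k)/q^i * saalschuetz_term q d e (Suc k) i)"

lemma saalschuetz_term_Suc_right:
  assumes q: "admissible_base q"
    and hd: "\<And>i. d*q^(Suc i) \<noteq> 1" and he: "\<And>i. e*q^(Suc i) \<noteq> 1"
  shows "q^k * ((1-q*q^i)*(1-d*q*q^i)*(1-e*q*q^i)) * saalschuetz_term q d e (Suc k) (Suc i)
       = saalschuetz_term q d e (Suc k) i * ((q*q^k-q^i)*(1-q*q*q^k*q^i)*(1-d*e*q^i))"
proof -
  have q0: "q \<noteq> 0" using q by (rule admissible_base_nonzero)
  define A1 where "A1 = qpoch_nat (1/q^(Suc k)) q i"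
  define A2 where "A2 = qpoch_nat (q^(Suc k+1)) q i"
  define A3 where "A3 = qpoch_nat (d*e) q i"
  define D where "D = qpoch_nat q q i * qpoch_nat (d*q) q i * qpoch_nat (e*q) q i"
  define W where "W = (1-q*q^i)*(1-d*q*q^i)*(1-e*q*q^i)"
  have D0: "D \<noteq> 0"
    using admissible_base_power[OF q] hd he unfolding D_def
    by (auto intro!: qpoch_nat_nonzero simp: mult.assoc simp flip: power_Suc)
  have W0: "W \<noteq> 0"
    using admissible_base_power[OF q, of "Suc i"] hd[of i] he[of i] by (simp add: W_def mult.assoc)
  have T1: "saalschuetz_term q d e (Suc k) (Suc i)
      = (A1*(1 - q^i/(q*q^k)))*(A2*(1-q*q*q^k*q^i))*(A3*(1-d*e*q^i))*(q*q^i)/(D*W)"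
    unfolding saalschuetz_term_def A1_def A2_def A3_def D_def W_def qpoch_nat_Suc
    by (simp add: algebra_simps)
  have Z: "saalschuetz_term q d e (Suc k) i = A1*A2*A3*q^i/D"
    by (simp add: saalschuetz_term_def A1_def A2_def A3_def D_def)
  have "q^k * W * saalschuetz_term q d e (Suc k) (Suc i)
      = saalschuetz_term q d e (Suc k) i * ((q*q^k-q^i)*(1-q*q*q^k*q^i)*(1-d*e*q^i))"
    unfolding T1 Z using q0 D0 W0 by (simp add: field_simps)
  then show ?thesis by (simp only: W_def)
qed

lemma saalschuetz_term_Suc_diag:
  assumes q: "admissible_base q"
    and hd: "\<And>i. d*q^(Suc i) \<noteq> 1" and he: "\<And>i. e*q^(Suc i) \<noteq> 1"
  shows "q^k * ((1-q*q^i)*(1-d*q*q^i)*(1-e*q*q^i)) * saalschuetz_term q d e k (Suc i)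
       = - (saalschuetz_term q d e (Suc k) i * ((q*q^k-q^i)*(q^k-q^i)*(1-d*e*q^i)*q))"
proof -
  have q0: "q \<noteq> 0" using q by (rule admissible_base_nonzero)
  define A1 where "A1 = qpoch_nat (1/q^(Suc k)) q i"
  define A2 where "A2 = qpoch_nat (q^(Suc k+1)) q i"
  define A3 where "A3 = qpoch_nat (d*e) q i"
  define D where "D = qpoch_nat q q i * qpoch_nat (d*q) q i * qpoch_nat (e*q) q i"
  define W where "W = (1-q*q^i)*(1-d*q*q^i)*(1-e*q*q^i)"
  have D0: "D \<noteq> 0"
    using admissible_base_power[OF q] hd he unfolding D_def
    by (auto intro!: qpoch_nat_nonzero simp: mult.assoc simp flip: power_Suc)
  have W0: "W \<noteq> 0"
    using admissible_base_power[OF q, of "Suc i"] hd[of i] he[of i] by (simp add: W_def mult.assoc)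
  have A1_shift: "qpoch_nat (1/q^k) q i * (q*q^k - 1) = A1*(q*q^k - q^i)"
    using qpoch_nat_inv_power_Suc[OF q0, of k i] by (simp add: A1_def mult.commute)
  have "saalschuetz_term q d e k (Suc i)
      = (qpoch_nat (1/q^k) q i*(1 - q^i/q^k))*((1-q*q^k)*A2)*(A3*(1-d*e*q^i))*(q*q^i)/(D*W)"
    unfolding saalschuetz_term_def qpoch_nat_Suc[of "1/q^k"] qpoch_nat_Suc[of "d*e"]
      qpoch_nat_Suc_shift[of "q^(k+1)"] qpoch_nat_Suc[of q] qpoch_nat_Suc[of "d*q"] qpoch_nat_Suc[of "e*q"]
    by (simp add: A2_def A3_def D_def W_def mult_ac)
  then have "q^k * W * saalschuetz_term q d e k (Suc i)
      = (qpoch_nat (1/q^k) q i * (q*q^k - 1)) * (-(q^k-q^i)*A2*A3*(1-d*e*q^i)*q*q^i/D)"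
    using W0 D0 q0 by (simp add: field_simps)
  also have "\<dots> = - (saalschuetz_term q d e (Suc k) i * ((q*q^k-q^i)*(q^k-q^i)*(1-d*e*q^i)*q))"
    unfolding A1_shift using D0
    by (simp add: saalschuetz_term_def A1_def A2_def A3_def D_def field_simps)
  finally show ?thesis unfolding W_def .
qed

text \<open>Here \<open>K = q^k\<close>, \<open>I = q^i\<close>, and \<open>Z\<close>, \<open>T1\<close>, \<open>T2\<close> stand for the terms at \<open>(k+1, i)\<close>,
  \<open>(k+1, i+1)\<close>, \<open>(k, i+1)\<close>, related by \<open>h1\<close> and \<open>h2\<close>.\<close>
lemma saalschuetz_cert_identity:
  fixes q K I d e Z W T1 T2 :: complex
  assumes nz: "K \<noteq> 0" "I \<noteq> 0" "W \<noteq> 0" and hW: "W = (1-q*I)*(1-d*q*I)*(1-e*q*I)"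
    and h1: "K*W*T1 = Z*((q*K-I)*(1-q*q*K*I)*(1-d*e*I))"
    and h2: "K*W*T2 = - (Z*((q*K-I)*(K-I)*(1-d*e*I)*q))"
  shows "T1*((1-d*q*K)*(1-e*q*K)) - T2*((d-q*K)*(e-q*K))
     = (1+q*K)*(1-d*e*q*I)*(I-K)/I*T1 - (1+q*K)*(1-d*e*I)*(I-q*K)/I*Z"
proof -
  let ?X = "T1*((1-d*q*K)*(1-e*q*K)) - T2*((d-q*K)*(e-q*K))"
  let ?R = "(1+q*K)*(1-d*e*q*I)*(I-K)*T1 - (1+q*K)*(1-d*e*I)*(I-q*K)*Z"
  have "K*W*(I*?X - ?R)
    = I*((1-d*q*K)*(1-e*q*K))*(K*W*T1) - I*((d-q*K)*(e-q*K))*(K*W*T2)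
      - (1+q*K)*(1-d*e*q*I)*(I-K)*(K*W*T1) + (1+q*K)*(1-d*e*I)*(I-q*K)*Z*K*W"
    by (simp add: algebra_simps)
  also have "\<dots> = I*((1-d*q*K)*(1-e*q*K))*(Z*((q*K-I)*(1-q*q*K*I)*(1-d*e*I)))
      - I*((d-q*K)*(e-q*K))*(- (Z*((q*K-I)*(K-I)*(1-d*e*I)*q)))
      - (1+q*K)*(1-d*e*q*I)*(I-K)*(Z*((q*K-I)*(1-q*q*K*I)*(1-d*e*I)))
      + (1+q*K)*(1-d*e*I)*(I-q*K)*Z*K*W"
    by (simp only: h1 h2)
  also have "\<dots> = 0"
    unfolding hW by (simp add: algebra_simps)
  finally have "I * ?X = ?R"
    using nz by simp
  then have "?X = ?R / I"
    using nz(2) by (metis nonzero_mult_div_cancel_left)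
  then show ?thesis
    by (simp add: diff_divide_distrib)
qed

lemma saalschuetz_term_telescopes:
  assumes q: "admissible_base q"
    and hd: "\<And>i. d*q^(Suc i) \<noteq> 1" and he: "\<And>i. e*q^(Suc i) \<noteq> 1"
  shows "saalschuetz_term q d e (Suc k) j * ((1-d*q*q^k)*(1-e*q*q^k))
       - saalschuetz_term q d e k j * ((d-q*q^k)*(e-q*q^k))
     = saalschuetz_cert q d e k (Suc j) - saalschuetz_cert q d e k j"
proof (cases j)
  case 0
  then show ?thesis by (simp add: saalschuetz_term_def saalschuetz_cert_def algebra_simps)
next
  case (Suc i)
  have q0: "q \<noteq> 0" using q by (rule admissible_base_nonzero)
  have W0: "(1-q*q^i)*(1-d*q*q^i)*(1-e*q*q^i) \<noteq> 0"
    using admissible_base_power[OF q, of "Suc i"] hd[of i] he[of i] by (simp add: mult.assoc)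
  have coeff: "(1+q*q^k)*(1-d*e*q^Suc i)*(q^Suc i-q*q^k)/q^Suc i = (1+q*q^k)*(1-d*e*q*q^i)*(q^i-q^k)/q^i"
    using q0 by (simp add: field_simps)
  show ?thesis
    unfolding Suc saalschuetz_cert_def nat.case coeff
    using q0 by (intro saalschuetz_cert_identity[OF _ _ W0 refl saalschuetz_term_Suc_right[OF q hd he]
      saalschuetz_term_Suc_diag[OF q hd he]]) simp_all
qed

theorem q_saalschuetz:
  assumes q: "admissible_base q" and d: "d \<noteq> 0" and e: "e \<noteq> 0"
    and hd: "\<And>i. d*q^(Suc i) \<noteq> 1" and he: "\<And>i. e*q^(Suc i) \<noteq> 1"
  shows "(\<Sum>j\<le>k. saalschuetz_term q d e k j) = wp_pair q d e k"
proof (induction k)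
  case 0
  then show ?case by (simp add: saalschuetz_term_def wp_pair_def)
next
  case (Suc k)
  have q0: "q \<noteq> 0" using q by (rule admissible_base_nonzero)
  have den: "(1-d*q*q^k)*(1-e*q*q^k) \<noteq> 0"
    using hd[of k] he[of k] by (simp add: mult.assoc)
  have "(\<Sum>j\<le>Suc k. saalschuetz_term q d e (Suc k) j) * ((1-d*q*q^k)*(1-e*q*q^k))
      = (\<Sum>j\<le>k. saalschuetz_term q d e k j) * ((d-q*q^k)*(e-q*q^k))"
    by (rule creative_telescoping[where G = "saalschuetz_cert q d e k"],
        rule saalschuetz_term_telescopes[OF q hd he])
      (simp_all add: saalschuetz_cert_def saalschuetz_term_def qpoch_nat_terminates q0)
  then have "(\<Sum>j\<le>Suc k. saalschuetz_term q d e (Suc k) j)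
      = wp_pair q d e k * ((d-q*q^k)*(e-q*q^k)) / ((1-d*q*q^k)*(1-e*q*q^k))"
    unfolding Suc by (rule eq_divide_imp[OF den])
  also have "(d-q*q^k)*(e-q*q^k) = (1 - q/d*q^k)*(1-q/e*q^k)*(d*e)"
    using d e by (simp add: field_simps)
  also have "wp_pair q d e k * ((1 - q/d*q^k)*(1-q/e*q^k)*(d*e)) / ((1-d*q*q^k)*(1-e*q*q^k))
      = wp_pair q d e (Suc k)"
    unfolding wp_pair_def qpoch_nat_Suc by (simp add: field_simps)
  finally show ?case .
qed

section \<open>A terminating very-well-poised summation\<close>

definition wp_terminating :: "complex \<Rightarrow> nat \<Rightarrow> nat \<Rightarrow> complex" where
  "wp_terminating q N k = qpoch_nat (1/q^N) q k * q^(N*k) / qpoch_nat (q^(N+2)) q k"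

definition wp_inner :: "complex \<Rightarrow> nat \<Rightarrow> nat \<Rightarrow> complex" where
  "wp_inner q j k = qpoch_nat (1/q^k) q j * qpoch_nat (q^(k+1)) q j"

definition wp_term :: "complex \<Rightarrow> complex \<Rightarrow> complex \<Rightarrow> nat \<Rightarrow> nat \<Rightarrow> nat \<Rightarrow> complex" where
  "wp_term q x y j N k = wp_terminating q N k * wp_pair q x y k * wp_inner q j k"

text \<open>Once the \<open>(d, e)\<close>-pair of Watson's series is expanded by the Saalschuetz sum, the
  coefficient of the \<open>j\<close>-th balanced term is \<open>\<Sum>k\<le>N. vwp_term q x y j N k\<close>: a terminating
  very-well-poised series in \<open>k\<close> weighted by the Saalschuetz kernel
  \<open>wp_inner q j k = (q^-k, q^(k+1); q)_j\<close>.\<close>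
definition vwp_term :: "complex \<Rightarrow> complex \<Rightarrow> complex \<Rightarrow> nat \<Rightarrow> nat \<Rightarrow> nat \<Rightarrow> complex" where
  "vwp_term q x y j N k = (1 - q^(2*k+1)) * wp_term q x y j N k"

lemma wp_inner_eq_0: "q \<noteq> 0 \<Longrightarrow> k < j \<Longrightarrow> wp_inner q j k = 0"
  by (simp add: wp_inner_def qpoch_nat_terminates)

lemma wp_terminating_Suc_N:
  assumes q: "admissible_base q"
  shows "(q*q^N-1)*(1-q^2*q^N)*q^m * wp_terminating q N (Suc m)
       = (1-q^3*q^N*q^m) * wp_terminating q (Suc N) (Suc m) * (q^N-q^m)"
proof -
  have q0: "q \<noteq> 0" using q by (rule admissible_base_nonzero)
  define B where "B = qpoch_nat (q^(N+3)) q m"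
  have B0: "B \<noteq> 0"
    unfolding B_def by (rule qpoch_nat_power_nonzero[OF q]) simp
  have c1: "1-q^3*q^N*q^m \<noteq> 0"
    using admissible_base_power[OF q, of "N+m+3"] by (simp add: power_add mult_ac)
  have c2: "1-q^2*q^N \<noteq> 0"
    using admissible_base_power[OF q, of "N+2"] by (simp add: power_add mult_ac power2_eq_square)
  have T1: "wp_terminating q (Suc N) (Suc m)
      = qpoch_nat (1/q^(Suc N)) q (Suc m) * q^(Suc N*Suc m) / (B*(1-q^3*q^N*q^m))"
    by (simp add: wp_terminating_def qpoch_nat_Suc B_def power_add mult_ac power3_eq_cube)
  have T0: "wp_terminating q N (Suc m) = qpoch_nat (1/q^N) q (Suc m) * q^(N*Suc m) / ((1-q^2*q^N)*B)"
    by (simp add: wp_terminating_def qpoch_nat_Suc_shift B_def power_add mult_ac power2_eq_square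
        power3_eq_cube)
  have "Suc N * Suc m = Suc m + N * Suc m" by simp
  then have exp: "q*q^m*q^(N*Suc m) = q^(Suc N*Suc m)"
    by (simp only: power_add power_Suc mult.assoc)
  have "(q*q^N-1)*(1-q^2*q^N)*q^m * wp_terminating q N (Suc m)
      = ((q*q^N - 1) * qpoch_nat (1/q^N) q (Suc m)) * q^m * q^(N*Suc m) / B"
    unfolding T0 using c2 B0 by (simp add: field_simps)
  also have "\<dots> = qpoch_nat (1/q^(Suc N)) q (Suc m) * (q^N - q^m) * (q*q^m*q^(N*Suc m)) / B"
    unfolding qpoch_nat_inv_power_Suc[OF q0, symmetric] by (simp add: algebra_simps)
  also have "\<dots> = (1-q^3*q^N*q^m) * wp_terminating q (Suc N) (Suc m) * (q^N-q^m)"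
    unfolding exp T1 using c1 B0 by (simp add: field_simps)
  finally show ?thesis .
qed

lemma wp_terminating_Suc_k:
  assumes q: "admissible_base q"
  shows "(1-q^3*q^N*q^m) * wp_terminating q (Suc N) (Suc m) = wp_terminating q (Suc N) m * (q*q^N - q^m)"
proof -
  have q0: "q \<noteq> 0" using q by (rule admissible_base_nonzero)
  have c1: "1-q^3*q^N*q^m \<noteq> 0"
    using admissible_base_power[OF q, of "N+m+3"] by (simp add: power_add mult_ac)
  have "Suc N * Suc m = Suc N * m + Suc N" by simp
  then have exp: "q^(Suc N*Suc m) = q^(Suc N*m) * (q*q^N)"
    by (simp only: power_add power_Suc)
  have "qpoch_nat (1/q^Suc N) q (Suc m) * q^(Suc N*Suc m)
      = qpoch_nat (1/q^Suc N) q m * ((1 - q^m/(q*q^N)) * (q*q^N)) * q^(Suc N*m)"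
    unfolding exp qpoch_nat_Suc by (simp add: mult_ac)
  also have "(1 - q^m/(q*q^N)) * (q*q^N) = q*q^N - q^m"
    using q0 by (simp add: field_simps)
  finally have "(1-q^3*q^N*q^m) * wp_terminating q (Suc N) (Suc m)
      = (1-q^3*q^N*q^m) * (qpoch_nat (1/q^Suc N) q m * (q*q^N - q^m) * q^(Suc N*m))
        / (qpoch_nat (q^(Suc N+2)) q m * (1-q^3*q^N*q^m))"
    by (simp add: wp_terminating_def qpoch_nat_Suc power_add power3_eq_cube mult_ac)
  then show ?thesis
    using c1 by (simp add: wp_terminating_def)
qed

lemma wp_pair_Suc:
  assumes "x \<noteq> 0" "y \<noteq> 0" and hx: "\<And>i. x*q^(Suc i) \<noteq> 1" and hy: "\<And>i. y*q^(Suc i) \<noteq> 1"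
  shows "wp_pair q x y (Suc m) * ((1-x*q*q^m)*(1-y*q*q^m)) = wp_pair q x y m * ((x-q*q^m)*(y-q*q^m))"
proof -
  have "wp_pair q x y (Suc m)
      = wp_pair q x y m * ((1-q/x*q^m)*(1-q/y*q^m)*(x*y)) / ((1-x*q*q^m)*(1-y*q*q^m))"
    unfolding wp_pair_def qpoch_nat_Suc by (simp add: mult_ac)
  moreover have "(1-x*q*q^m)*(1-y*q*q^m) \<noteq> 0"
    using hx[of m] hy[of m] by (simp add: mult_ac)
  moreover have "(1-q/x*q^m)*(1-q/y*q^m)*(x*y) = (x-q*q^m)*(y-q*q^m)"
    using assms(1,2) by (simp add: field_simps)
  ultimately show ?thesis
    by simp
qed

lemma wp_inner_Suc:
  assumes "q \<noteq> 0"
  shows "wp_inner q j (Suc m) * (q^j - q*q^m) = wp_inner q j m * (1 - q*q^m*q^j)"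
proof -
  have "qpoch_nat (q^Suc m) q j * (1 - q*q^m*q^j) = (1-q*q^m) * qpoch_nat (q^Suc (Suc m)) q j"
    using qpoch_nat_mult_q[of "q^Suc m" q j] by (simp add: mult.commute)
  then have "wp_inner q j m * (1 - q*q^m*q^j)
      = qpoch_nat (1/q^m) q j * (1-q*q^m) * qpoch_nat (q^Suc (Suc m)) q j"
    unfolding wp_inner_def by (simp add: mult.assoc)
  also have "\<dots> = - ((q*q^m - 1) * qpoch_nat (1/q^m) q j) * qpoch_nat (q^Suc (Suc m)) q j"
    by (simp add: algebra_simps)
  also have "\<dots> = wp_inner q j (Suc m) * (q^j - q*q^m)"
    unfolding qpoch_nat_inv_power_Suc[OF assms, symmetric] wp_inner_def by (simp add: algebra_simps)
  finally show ?thesis ..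
qed

lemma wp_term_Suc_N:
  assumes "admissible_base q"
  shows "(q*q^N-1)*(1-q^2*q^N)*q^m * wp_term q x y j N (Suc m)
       = (1-q^3*q^N*q^m) * wp_term q x y j (Suc N) (Suc m) * (q^N-q^m)"
proof -
  have "(q*q^N-1)*(1-q^2*q^N)*q^m * wp_term q x y j N (Suc m)
      = ((q*q^N-1)*(1-q^2*q^N)*q^m * wp_terminating q N (Suc m)) * (wp_pair q x y (Suc m) * wp_inner q j (Suc m))"
    by (simp add: wp_term_def mult_ac)
  also have "\<dots> = ((1-q^3*q^N*q^m) * wp_terminating q (Suc N) (Suc m) * (q^N-q^m))
      * (wp_pair q x y (Suc m) * wp_inner q j (Suc m))"
    by (simp only: wp_terminating_Suc_N[OF assms])
  also have "\<dots> = (1-q^3*q^N*q^m) * wp_term q x y j (Suc N) (Suc m) * (q^N-q^m)"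
    by (simp add: wp_term_def mult_ac)
  finally show ?thesis .
qed

lemma wp_term_Suc_k:
  assumes q: "admissible_base q" and "x \<noteq> 0" "y \<noteq> 0"
    and hx: "\<And>i. x*q^(Suc i) \<noteq> 1" and hy: "\<And>i. y*q^(Suc i) \<noteq> 1"
  shows "(1-q*q^m*q^j) * wp_term q x y j (Suc N) m * ((x-q*q^m)*(y-q*q^m)*(q*q^N-q^m))
       = (1-q^3*q^N*q^m) * wp_term q x y j (Suc N) (Suc m) * ((1-x*q*q^m)*(1-y*q*q^m)*(q^j-q*q^m))"
proof -
  have "(1-q^3*q^N*q^m) * wp_term q x y j (Suc N) (Suc m) * ((1-x*q*q^m)*(1-y*q*q^m)*(q^j-q*q^m))
      = ((1-q^3*q^N*q^m) * wp_terminating q (Suc N) (Suc m))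
        * (wp_pair q x y (Suc m) * ((1-x*q*q^m)*(1-y*q*q^m))) * (wp_inner q j (Suc m) * (q^j-q*q^m))"
    by (simp add: wp_term_def mult_ac)
  also have "\<dots> = (wp_terminating q (Suc N) m * (q*q^N - q^m))
        * (wp_pair q x y m * ((x-q*q^m)*(y-q*q^m))) * (wp_inner q j m * (1 - q*q^m*q^j))"
    by (simp only: wp_terminating_Suc_k[OF q] wp_pair_Suc[OF assms(2-5)]
        wp_inner_Suc[OF admissible_base_nonzero[OF q]])
  also have "\<dots> = (1-q*q^m*q^j) * wp_term q x y j (Suc N) m * ((x-q*q^m)*(y-q*q^m)*(q*q^N-q^m))"
    by (simp add: wp_term_def mult_ac)
  finally show ?thesis ..
qed

text \<open>Here \<open>X = q^m\<close>, \<open>M = q^N\<close>, \<open>J = q^j\<close>, and \<open>T0\<close>, \<open>T1\<close>, \<open>Tn\<close> stand for the terms at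
  \<open>(N+1, m)\<close>, \<open>(N+1, m+1)\<close>, \<open>(N, m+1)\<close>, related by \<open>h0\<close> and \<open>hn\<close>.\<close>
lemma vwp_cert_identity:
  fixes q X M J x y T0 T1 Tn :: complex
  assumes X0: "X \<noteq> 0" and q0: "q \<noteq> 0" and c0: "1-q^3*M*X \<noteq> 0"
    and hn: "(q*M-1)*(1-q^2*M)*X*Tn = (1-q^3*M*X)*T1*(M-X)"
    and h0: "(1-q*X*J)*T0*((x-q*X)*(y-q*X)*(q*M-X)) = (1-q^3*M*X)*T1*((1-x*q*X)*(1-y*q*X)*(J-q*X))"
  shows "((1-q^3*X^2)*T1) * ((1-x*q*M)*(1-y*q*M)*(q*M-J)*(M*x*y-1))
       - ((1-q^3*X^2)*Tn) * ((1-q^2*M)*(1-x*y*M)*(q*M-1)*(M*x*y-J))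
     = T1*((x*y*M-1)*(1-q^2*X*J)*(x-q^2*X)*(y-q^2*X)*(q*M-q*X)*M/(q*X))
       - T0*((x*y*M-1)*(1-q*X*J)*(x-q*X)*(y-q*X)*(q*M-X)*M/X)"
proof -
  define V where "V = (1-q^3*M*X)*T1"
  have e1: "X*(T1*((x*y*M-1)*(1-q^2*X*J)*(x-q^2*X)*(y-q^2*X)*(q*M-q*X)*M/(q*X)))
      = T1*((x*y*M-1)*(1-q^2*X*J)*(x-q^2*X)*(y-q^2*X)*(M-X)*M)"
    using X0 q0 by (simp add: field_simps)
  have e2: "X*(T0*((x*y*M-1)*(1-q*X*J)*(x-q*X)*(y-q*X)*(q*M-X)*M/X))
      = (x*y*M-1)*M*((1-q*X*J)*T0*((x-q*X)*(y-q*X)*(q*M-X)))"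
    using X0 by (simp add: field_simps)
  have "X*(1-q^3*M*X)*(((1-q^3*X^2)*T1) * ((1-x*q*M)*(1-y*q*M)*(q*M-J)*(M*x*y-1))
       - ((1-q^3*X^2)*Tn) * ((1-q^2*M)*(1-x*y*M)*(q*M-1)*(M*x*y-J))
     - (T1*((x*y*M-1)*(1-q^2*X*J)*(x-q^2*X)*(y-q^2*X)*(q*M-q*X)*M/(q*X))
       - T0*((x*y*M-1)*(1-q*X*J)*(x-q*X)*(y-q*X)*(q*M-X)*M/X)))
    = ((1-x*q*M)*(1-y*q*M)*(q*M-J)*(M*x*y-1))*(1-q^3*X^2)*X*((1-q^3*M*X)*T1)
      - (1-x*y*M)*(M*x*y-J)*(1-q^3*X^2)*(1-q^3*M*X)*((q*M-1)*(1-q^2*M)*X*Tn)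
      - (1-q^3*M*X)*(X*(T1*((x*y*M-1)*(1-q^2*X*J)*(x-q^2*X)*(y-q^2*X)*(q*M-q*X)*M/(q*X))))
      + (1-q^3*M*X)*(X*(T0*((x*y*M-1)*(1-q*X*J)*(x-q*X)*(y-q*X)*(q*M-X)*M/X)))"
    by (simp add: algebra_simps)
  also have "\<dots> = ((1-x*q*M)*(1-y*q*M)*(q*M-J)*(M*x*y-1))*(1-q^3*X^2)*X*V
      - (1-x*y*M)*(M*x*y-J)*(1-q^3*X^2)*(1-q^3*M*X)*(V*(M-X))
      - (1-q^3*M*X)*(T1*((x*y*M-1)*(1-q^2*X*J)*(x-q^2*X)*(y-q^2*X)*(M-X)*M))
      + (1-q^3*M*X)*((x*y*M-1)*M*(V*((1-x*q*X)*(1-y*q*X)*(J-q*X))))"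
    unfolding e1 e2 hn h0 V_def by (simp add: mult.assoc)
  also have "\<dots> = V*(((1-x*q*M)*(1-y*q*M)*(q*M-J)*(M*x*y-1))*(1-q^3*X^2)*X
      - (1-x*y*M)*(M*x*y-J)*(1-q^3*X^2)*(1-q^3*M*X)*(M-X)
      - (x*y*M-1)*(1-q^2*X*J)*(x-q^2*X)*(y-q^2*X)*(M-X)*M
      + (1-q^3*M*X)*(x*y*M-1)*M*(1-x*q*X)*(1-y*q*X)*(J-q*X))"
    unfolding V_def by (simp add: algebra_simps)
  also have "\<dots> = 0"
    by (simp add: algebra_simps power2_eq_square power3_eq_cube)
  finally show ?thesis
    using X0 c0 by simp
qed

text \<open>Zeilberger data for the sum of \<open>vwp_term\<close> over \<open>k\<close>: its recurrence in \<open>N\<close> has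
  coefficients \<open>vwp_alpha\<close>, \<open>vwp_beta\<close> and certificate \<open>vwp_cert\<close>.\<close>
definition vwp_cert :: "complex \<Rightarrow> complex \<Rightarrow> complex \<Rightarrow> nat \<Rightarrow> nat \<Rightarrow> nat \<Rightarrow> complex" where
  "vwp_cert q x y j N k = (case k of 0 \<Rightarrow> 0 | Suc m \<Rightarrow> wp_term q x y j (Suc N) m *
     ((x*y*q^N-1)*(1-q*q^m*q^j)*(x-q*q^m)*(y-q*q^m)*(q*q^N-q^m)*q^N/q^m))"

definition vwp_alpha :: "complex \<Rightarrow> complex \<Rightarrow> complex \<Rightarrow> nat \<Rightarrow> nat \<Rightarrow> complex" where
  "vwp_alpha q x y j N = (1-x*q*q^N)*(1-y*q*q^N)*(q*q^N-q^j)*(q^N*x*y-1)"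

definition vwp_beta :: "complex \<Rightarrow> complex \<Rightarrow> complex \<Rightarrow> nat \<Rightarrow> nat \<Rightarrow> complex" where
  "vwp_beta q x y j N = (1-q^2*q^N)*(1-x*y*q^N)*(q*q^N-1)*(q^N*x*y-q^j)"

lemma vwp_term_telescopes:
  assumes q: "admissible_base q" and "x \<noteq> 0" "y \<noteq> 0"
    and hx: "\<And>i. x*q^(Suc i) \<noteq> 1" and hy: "\<And>i. y*q^(Suc i) \<noteq> 1"
  shows "vwp_term q x y j (Suc N) k * vwp_alpha q x y j N - vwp_term q x y j N k * vwp_beta q x y j N
       = vwp_cert q x y j N (Suc k) - vwp_cert q x y j N k"
proof (cases k)
  case 0
  show ?thesis
  proof (cases j)
    case 0
    then show ?thesis
      using \<open>k = 0\<close> by (simp add: vwp_alpha_def vwp_beta_def vwp_term_def vwp_cert_def wp_term_def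
          wp_terminating_def wp_pair_def wp_inner_def algebra_simps power2_eq_square)
  next
    case (Suc j')
    then have "wp_inner q j 0 = 0"
      by (intro wp_inner_eq_0 admissible_base_nonzero[OF q]) simp
    then show ?thesis
      using \<open>k = 0\<close> by (simp add: vwp_term_def vwp_cert_def wp_term_def)
  qed
next
  case (Suc m)
  have q0: "q \<noteq> 0" using q by (rule admissible_base_nonzero)
  have c1: "1-q^3*q^N*q^m \<noteq> 0"
    using admissible_base_power[OF q, of "N+m+3"] by (simp add: power_add mult_ac)
  have p1: "1 - q^(2*Suc m+1) = 1-q^3*(q^m)^2"
    by (simp add: power_add power_mult power2_eq_square power3_eq_cube mult_ac flip: power_mult_distrib)
  have p2: "(x*y*q^N-1)*(1-q*q^(Suc m)*q^j)*(x-q*q^(Suc m))*(y-q*q^(Suc m))*(q*q^N-q^(Suc m))*q^N/q^(Suc m)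
     = (x*y*q^N-1)*(1-q^2*q^m*q^j)*(x-q^2*q^m)*(y-q^2*q^m)*(q*q^N-q*q^m)*q^N/(q*q^m)"
    by (simp add: power2_eq_square mult_ac)
  have "q^m \<noteq> 0"
    using q0 by simp
  then show ?thesis
    using vwp_cert_identity[OF _ q0 c1 wp_term_Suc_N[OF q, of N m x y j] wp_term_Suc_k[OF assms, of m j N]]
    unfolding Suc vwp_term_def vwp_cert_def vwp_alpha_def vwp_beta_def nat.case p1 p2
    by (simp add: mult_ac)
qed

definition vwp_closed_form :: "complex \<Rightarrow> complex \<Rightarrow> complex \<Rightarrow> nat \<Rightarrow> nat \<Rightarrow> complex" where
  "vwp_closed_form q x y j N =
     qpoch_nat q q (Suc N) * qpoch_nat (x*y) q N * qpoch_nat (1/q^N) q j * qpoch_nat (q/x) q j * qpoch_nat (q/y) q j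
     / (qpoch_nat (x*q) q N * qpoch_nat (y*q) q N * qpoch_nat (q/(q^N*x*y)) q j)"

lemma vwp_summation_base:
  assumes q: "admissible_base q" and x0: "x \<noteq> 0" and y0: "y \<noteq> 0"
    and b0: "qpoch_nat (q/(q^j*x*y)) q j \<noteq> 0"
  shows "vwp_term q x y j j j = vwp_closed_form q x y j j"
proof -
  have q0: "q \<noteq> 0" using q by (rule admissible_base_nonzero)
  define a where "a = qpoch_nat (1/q^j) q j"
  define b where "b = qpoch_nat (q/(q^j*x*y)) q j"
  define U where "U = qpoch_nat (q/x) q j * qpoch_nat (q/y) q j / (qpoch_nat (x*q) q j * qpoch_nat (y*q) q j)"
  have B0: "qpoch_nat (q^(j+2)) q j \<noteq> 0"
    by (rule qpoch_nat_power_nonzero[OF q]) simp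
  have "2*j+1 = (j+1)+j"
    by simp
  then have F: "qpoch_nat (q^(j+1)) q j * (1 - q^(2*j+1)) = (1-q^(j+1)) * qpoch_nat (q^(j+2)) q j"
    using qpoch_nat_mult_q[of "q^(j+1)" q j] by (simp only: power_add) (simp add: mult_ac power2_eq_square)
  have "vwp_term q x y j j j
      = (qpoch_nat (q^(j+1)) q j * (1 - q^(2*j+1))) * a * a * q^(j*j) / qpoch_nat (q^(j+2)) q j * ((x*y)^j * U)"
    unfolding vwp_term_def wp_term_def wp_terminating_def wp_pair_def wp_inner_def a_def U_def
    by (simp add: mult_ac)
  also have "\<dots> = (1-q^(j+1)) * a * a * q^(j*j) * (x*y)^j * U"
    unfolding F using B0 by (simp add: field_simps)
  also have "\<dots> = (1-q^(j+1)) * (a * b * q^(j*j) * (x*y)^j) * a * U / b"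
    using b0 by (simp add: b_def)
  also have "\<dots> = (1-q^(j+1)) * (qpoch_nat q q j * qpoch_nat (x*y) q j) * a * U / b"
    using qpoch_nat_reflected_product[OF q0, of "x*y" j] x0 y0 by (simp add: a_def b_def mult_ac)
  also have "\<dots> = vwp_closed_form q x y j j"
    by (simp add: vwp_closed_form_def qpoch_nat_Suc a_def b_def U_def mult_ac)
  finally show ?thesis .
qed

lemma vwp_closed_form_rec:
  assumes q: "admissible_base q" and x0: "x \<noteq> 0" and y0: "y \<noteq> 0"
    and hx: "\<And>i. x*q^(Suc i) \<noteq> 1" and hy: "\<And>i. y*q^(Suc i) \<noteq> 1"
    and w1: "qpoch_nat (q/(q^n*x*y)) q j \<noteq> 0" and w2: "qpoch_nat (q/(q^(Suc n)*x*y)) q j \<noteq> 0"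
  shows "vwp_closed_form q x y j (Suc n) * vwp_alpha q x y j n = vwp_closed_form q x y j n * vwp_beta q x y j n"
proof -
  have q0: "q \<noteq> 0" using q by (rule admissible_base_nonzero)
  define M where "M = q^n"
  define J where "J = q^j"
  define A where "A = qpoch_nat (1/q^n) q j"
  define A' where "A' = qpoch_nat (1/q^(Suc n)) q j"
  define W where "W = qpoch_nat (q/(q^n*x*y)) q j"
  define W' where "W' = qpoch_nat (q/(q^(Suc n)*x*y)) q j"
  define C where "C = qpoch_nat q q (Suc n) * (1-q^2*M) * qpoch_nat (x*y) q n * (1-x*y*M)
      * qpoch_nat (q/x) q j * qpoch_nat (q/y) q j / (qpoch_nat (x*q) q n * qpoch_nat (y*q) q n)"
  have M0: "M \<noteq> 0"
    using q0 by (simp add: M_def)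
  have cxy: "(1-x*q*M)*(1-y*q*M) \<noteq> 0"
    using hx[of n] hy[of n] by (simp add: M_def mult_ac)
  have fA: "A'*(q*M - J) = (q*M - 1)*A"
    using qpoch_nat_inv_power_Suc[OF q0, of n j] by (simp add: A_def A'_def M_def J_def)
  have "W' * (q - q/(M*x*y)*J) = (q - q/(M*x*y)) * W"
    using qpoch_nat_div_q[OF q0, of "q/(q^n*x*y)" j] q0
    by (simp add: W_def W'_def M_def J_def mult_ac)
  moreover have "(q - q/(M*x*y)*J) * (M*x*y/q) = M*x*y - J" "(q - q/(M*x*y)) * (M*x*y/q) = M*x*y - 1"
    using q0 x0 y0 M0 by (simp_all add: field_simps)
  ultimately have fW: "W'*(M*x*y - J) = (M*x*y - 1)*W"
    by (metis mult.assoc mult.commute)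
  have "vwp_closed_form q x y j (Suc n) = C * A' / ((1-x*q*M)*(1-y*q*M) * W')"
    by (simp add: vwp_closed_form_def C_def A'_def W'_def M_def qpoch_nat_Suc power2_eq_square mult_ac)
  then have L: "vwp_closed_form q x y j (Suc n) * vwp_alpha q x y j n = C * (A'*(q*M-J)) * ((M*x*y-1)/W')"
    using cxy by (simp add: vwp_alpha_def M_def J_def mult_ac)
  have R: "vwp_closed_form q x y j n * vwp_beta q x y j n = C * ((q*M-1)*A) * ((M*x*y-J)/W)"
    using hx hy by (simp add: vwp_closed_form_def vwp_beta_def C_def A_def W_def M_def J_def
        qpoch_nat_shift_nonzero field_simps)
  have "(M*x*y-1)/W' = (M*x*y-J)/W"
    using fW w1 w2 by (simp add: W_def W'_def field_simps)
  then show ?thesis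
    unfolding L R fA by simp
qed

lemma vwp_denominator_nonzero:
  assumes q: "admissible_base q" and hxy: "\<And>i. x*y*q^N \<noteq> q^(Suc i)" and "n \<le> N"
  shows "qpoch_nat (q/(q^n*x*y)) q j \<noteq> 0"
proof (rule qpoch_nat_nonzero)
  fix i
  show "q/(q^n*x*y)*q^i \<noteq> 1"
  proof
    assume "q/(q^n*x*y)*q^i = 1"
    then have "q^(Suc i) = q^n*x*y"
      by (auto simp: field_simps split: if_splits)
    then have "x*y*q^N = q^(Suc i)*q^(N-n)"
      using \<open>n \<le> N\<close> by (simp add: mult_ac flip: power_add)
    also have "\<dots> = q^(Suc (i + (N-n)))"
      by (simp add: power_add)
    finally show False
      using hxy by blast
  qed
qed

lemma vwp_alpha_nonzero:
  assumes q: "admissible_base q" and hx: "\<And>i. x*q^(Suc i) \<noteq> 1" and hy: "\<And>i. y*q^(Suc i) \<noteq> 1"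
    and hxy: "\<And>i. x*y*q^N \<noteq> q^(Suc i)" and "n < N" "j \<le> n"
  shows "vwp_alpha q x y j n \<noteq> 0"
proof -
  have q0: "q \<noteq> 0" using q by (rule admissible_base_nonzero)
  have "q*q^n \<noteq> q^j"
  proof
    assume "q*q^n = q^j"
    then have "q^j * q^(Suc n - j) = q^j * 1"
      using \<open>j \<le> n\<close> by (simp flip: power_add)
    then show False
      using q0 admissible_base_power[OF q, of "Suc n - j"] \<open>j \<le> n\<close> by simp
  qed
  moreover have "q^n*x*y \<noteq> 1"
  proof
    assume "q^n*x*y = 1"
    then have "x*y*q^N = q^(Suc (N-n-1))"
      using \<open>n < N\<close> by (metis Suc_diff_Suc diff_Suc_1 le_add_diff_inverse less_imp_le_nat
          mult.commute mult_1 power_add mult.left_commute)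
    with hxy show False by blast
  qed
  ultimately show ?thesis
    using hx[of n] hy[of n] by (simp add: vwp_alpha_def mult_ac)
qed

theorem vwp_summation:
  assumes q: "admissible_base q" and x0: "x \<noteq> 0" and y0: "y \<noteq> 0"
    and hx: "\<And>i. x*q^(Suc i) \<noteq> 1" and hy: "\<And>i. y*q^(Suc i) \<noteq> 1"
    and hxy: "\<And>i. x*y*q^N0 \<noteq> q^(Suc i)" and "j \<le> N" "N \<le> N0"
  shows "(\<Sum>k\<le>N. vwp_term q x y j N k) = vwp_closed_form q x y j N"
  using assms(7,8)
proof (induction N rule: dec_induct)
  case base
  have q0: "q \<noteq> 0" using q by (rule admissible_base_nonzero)
  have "(\<Sum>k\<le>j. vwp_term q x y j j k) = vwp_term q x y j j j"
    using q0 by (subst sum.remove[of _ j]) (auto intro!: sum.neutral simp: vwp_term_def wp_term_def wp_inner_eq_0)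
  also have "\<dots> = vwp_closed_form q x y j j"
    by (rule vwp_summation_base[OF q x0 y0 vwp_denominator_nonzero[OF q hxy base]])
  finally show ?case .
next
  case (step n)
  have q0: "q \<noteq> 0" using q by (rule admissible_base_nonzero)
  have "(\<Sum>k\<le>Suc n. vwp_term q x y j (Suc n) k) * vwp_alpha q x y j n
      = (\<Sum>k\<le>n. vwp_term q x y j n k) * vwp_beta q x y j n"
    by (rule creative_telescoping[where G = "vwp_cert q x y j n"],
        rule vwp_term_telescopes[OF q x0 y0 hx hy])
      (simp_all add: vwp_cert_def vwp_term_def wp_term_def wp_terminating_def qpoch_nat_terminates q0)
  also have "\<dots> = vwp_closed_form q x y j (Suc n) * vwp_alpha q x y j n"
    using step vwp_closed_form_rec[OF q x0 y0 hx hy vwp_denominator_nonzero[OF q hxy]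
        vwp_denominator_nonzero[OF q hxy]] by simp
  finally show ?case
    using vwp_alpha_nonzero[OF q hx hy hxy] step by simp
qed

section \<open>Watson's transformation\<close>

theorem watson_transformation:
  assumes q: "admissible_base q" and x0: "x \<noteq> 0" and y0: "y \<noteq> 0" and d0: "d \<noteq> 0" and e0: "e \<noteq> 0"
    and hx: "\<And>i. x*q^(Suc i) \<noteq> 1" and hy: "\<And>i. y*q^(Suc i) \<noteq> 1"
    and hd: "\<And>i. d*q^(Suc i) \<noteq> 1" and he: "\<And>i. e*q^(Suc i) \<noteq> 1"
    and hxy: "\<And>i. x*y*q^N \<noteq> q^(Suc i)"
  shows "(\<Sum>m\<le>N. (1-q^(2*m+1)) * wp_terminating q N m * wp_pair q x y m * wp_pair q d e m)
       = qpoch_nat q q (Suc N) * qpoch_nat (x*y) q N / (qpoch_nat (x*q) q N * qpoch_nat (y*q) q N)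
         * (\<Sum>j\<le>N. qpoch_nat (1/q^N) q j * qpoch_nat (q/x) q j * qpoch_nat (q/y) q j * qpoch_nat (d*e) q j
              / (qpoch_nat q q j * qpoch_nat (q/(q^N*x*y)) q j * qpoch_nat (d*q) q j * qpoch_nat (e*q) q j) * q^j)"
proof -
  have q0: "q \<noteq> 0" using q by (rule admissible_base_nonzero)
  define D where "D j = qpoch_nat (d*e) q j * q^j / (qpoch_nat q q j * qpoch_nat (d*q) q j * qpoch_nat (e*q) q j)" for j
  have saal: "saalschuetz_term q d e m j = wp_inner q j m * D j" for m j
    by (simp add: saalschuetz_term_def wp_inner_def D_def)
  have "(\<Sum>m\<le>N. (1-q^(2*m+1)) * wp_terminating q N m * wp_pair q x y m * wp_pair q d e m)
      = (\<Sum>m\<le>N. \<Sum>j\<le>m. vwp_term q x y j N m * D j)"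
    unfolding q_saalschuetz[OF q d0 e0 hd he, symmetric] sum_distrib_left saal
    by (simp add: vwp_term_def wp_term_def mult_ac)
  also have "\<dots> = (\<Sum>m\<le>N. \<Sum>j\<le>N. vwp_term q x y j N m * D j)"
    using q0 by (intro sum.cong refl sum.mono_neutral_left)
      (auto simp: vwp_term_def wp_term_def wp_inner_eq_0)
  also have "\<dots> = (\<Sum>j\<le>N. (\<Sum>m\<le>N. vwp_term q x y j N m) * D j)"
    by (subst sum.swap) (simp add: sum_distrib_right)
  also have "\<dots> = (\<Sum>j\<le>N. vwp_closed_form q x y j N * D j)"
    by (simp add: vwp_summation[OF q x0 y0 hx hy hxy])
  also have "\<dots> = qpoch_nat q q (Suc N) * qpoch_nat (x*y) q N / (qpoch_nat (x*q) q N * qpoch_nat (y*q) q N)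
         * (\<Sum>j\<le>N. qpoch_nat (1/q^N) q j * qpoch_nat (q/x) q j * qpoch_nat (q/y) q j * qpoch_nat (d*e) q j
              / (qpoch_nat q q j * qpoch_nat (q/(q^N*x*y)) q j * qpoch_nat (d*q) q j * qpoch_nat (e*q) q j) * q^j)"
    unfolding sum_distrib_left by (simp add: vwp_closed_form_def D_def mult_ac)
  finally show ?thesis .
qed

section \<open>Infinite products\<close>

lemma qpoch_nat_converges_nonzero:
  assumes "norm q < 1" and nz: "\<And>i. a * q ^ i \<noteq> 1"
  obtains L where "(\<lambda>n. qpoch_nat a q n) \<longlonglongrightarrow> L" "L \<noteq> 0"
proof -
  define f where "f i = 1 - a * q ^ i" for i
  have "summable (\<lambda>i. norm a * norm q ^ i)"
    using assms(1) by (intro summable_mult summable_geometric) simp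
  then have "summable (\<lambda>i. norm (f i - 1))"
    by (simp add: f_def norm_mult norm_power)
  then have "convergent_prod f"
    by (intro abs_convergent_prod_imp_convergent_prod summable_imp_abs_convergent_prod)
  then obtain L where L: "(\<lambda>n. \<Prod>i\<le>n. f i) \<longlonglongrightarrow> L" "L \<noteq> 0"
    using convergent_prod_iff_nz_lim[of f] nz by (auto simp: f_def)
  have "(\<lambda>n. qpoch_nat a q (Suc n)) \<longlonglongrightarrow> L"
    using L(1) by (simp add: qpoch_nat_def f_def lessThan_Suc_atMost)
  then have "(\<lambda>n. qpoch_nat a q n) \<longlonglongrightarrow> L"
    by (rule LIMSEQ_imp_Suc)
  with L(2) show thesis
    using that by blast
qed

lemma qpoch_nat_tendsto_qpinf:
  assumes "norm q < 1"
  shows "(\<lambda>n. qpoch_nat a q n) \<longlonglongrightarrow> qpinf a q"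
proof (cases "\<exists>i. a * q ^ i = 1")
  case True
  then obtain i where "a * q ^ i = 1" by blast
  then have "(\<lambda>n. qpoch_nat a q (n + Suc i)) \<longlonglongrightarrow> 0"
    by (simp add: qpoch_nat_eq_0)
  then have "(\<lambda>n. qpoch_nat a q n) \<longlonglongrightarrow> 0"
    by (rule LIMSEQ_offset)
  moreover from this have "qpinf a q = 0"
    unfolding qpinf_def qpoch_of_nat by (rule limI)
  ultimately show ?thesis by simp
next
  case False
  then obtain L where "(\<lambda>n. qpoch_nat a q n) \<longlonglongrightarrow> L"
    using qpoch_nat_converges_nonzero[OF assms] by blast
  moreover from this have "qpinf a q = L"
    unfolding qpinf_def qpoch_of_nat by (rule limI)
  ultimately show ?thesis by simp
qed

lemma qpinf_nonzero:
  assumes "norm q < 1" and "\<And>i. a * q ^ i \<noteq> 1"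
  shows "qpinf a q \<noteq> 0"
proof -
  obtain L where "(\<lambda>n. qpoch_nat a q n) \<longlonglongrightarrow> L" "L \<noteq> 0"
    using qpoch_nat_converges_nonzero[OF assms] .
  with LIMSEQ_unique[OF qpoch_nat_tendsto_qpinf[OF assms(1)]] show ?thesis
    by auto
qed

lemma qpinf_split:
  assumes "norm q < 1"
  shows "qpinf a q = qpoch_nat a q m * qpinf (a * q ^ m) q"
proof -
  have "(\<lambda>n. qpoch_nat a q (n + m)) \<longlonglongrightarrow> qpoch_nat a q m * qpinf (a * q ^ m) q"
    unfolding add.commute[of _ m] qpoch_nat_add
    by (intro tendsto_mult tendsto_const qpoch_nat_tendsto_qpinf[OF assms])
  then have "(\<lambda>n. qpoch_nat a q n) \<longlonglongrightarrow> qpoch_nat a q m * qpinf (a * q ^ m) q"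
    by (rule LIMSEQ_offset)
  with qpoch_nat_tendsto_qpinf[OF assms] show ?thesis
    using LIMSEQ_unique by blast
qed

lemma qpinf_power_mult_nonzero:
  assumes "norm q < 1" and "\<And>i. b * q ^ Suc i \<noteq> 1"
  shows "qpinf (q ^ Suc N * b) q \<noteq> 0"
proof (rule qpinf_nonzero[OF assms(1)])
  fix i
  have "q ^ Suc N * b * q ^ i = b * q ^ Suc (N + i)"
    by (simp add: power_add mult_ac)
  then show "q ^ Suc N * b * q ^ i \<noteq> 1"
    using assms(2)[of "N + i"] by argo
qed

definition watson_factor :: "complex \<Rightarrow> complex \<Rightarrow> complex \<Rightarrow> complex \<Rightarrow> complex" where
  "watson_factor q a b c = qpinf q q * qpinf (a*b) q * qpinf (b*c) q * qpinf (a*c) q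
     / (qpinf (a*q) q * qpinf (b*q) q * qpinf (c*q) q * qpinf (a*b*c/q) q)"

lemma watson_factor_terminating:
  assumes "norm q < 1" and q: "admissible_base q" and aN: "a = q^Suc N"
    and hb: "\<And>i. b*q^(Suc i) \<noteq> 1" and hc: "\<And>i. c*q^(Suc i) \<noteq> 1"
    and hinf: "qpinf (a*b*c/q) q \<noteq> 0"
  shows "watson_factor q a b c = qpoch_nat q q (Suc N) * qpoch_nat (b*c) q N / (qpoch_nat (b*q) q N * qpoch_nat (c*q) q N)"
proof -
  have q0: "q \<noteq> 0" using q by (rule admissible_base_nonzero)
  have "qpinf q q = qpoch_nat q q (Suc N) * qpinf (a*q) q"
    using qpinf_split[OF assms(1), of q "Suc N"] by (simp add: aN mult_ac)
  moreover have "qpinf (b*q) q = qpoch_nat (b*q) q N * qpinf (a*b) q"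
    using qpinf_split[OF assms(1), of "b*q" N] by (simp add: aN mult_ac)
  moreover have "qpinf (c*q) q = qpoch_nat (c*q) q N * qpinf (a*c) q"
    using qpinf_split[OF assms(1), of "c*q" N] by (simp add: aN mult_ac)
  moreover have "qpinf (b*c) q = qpoch_nat (b*c) q N * qpinf (a*b*c/q) q"
    using qpinf_split[OF assms(1), of "b*c" N] q0 by (simp add: aN mult_ac)
  moreover have "qpinf (a*q) q \<noteq> 0" "qpinf (a*b) q \<noteq> 0" "qpinf (a*c) q \<noteq> 0"
    unfolding aN using admissible_base_power[OF q zero_less_Suc]
    by (auto intro!: qpinf_power_mult_nonzero[OF assms(1)] hb hc simp flip: power_Suc)
  ultimately show ?thesis
    using hinf by (simp add: watson_factor_def field_simps)
qed

section \<open>The bilateral series\<close>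

definition bilateral_term :: "complex \<Rightarrow> complex \<Rightarrow> complex \<Rightarrow> complex \<Rightarrow> complex \<Rightarrow> complex \<Rightarrow> int \<Rightarrow> complex" where
  "bilateral_term q a b c d e k =
     qpoch (q/a) q k * qpoch (q/b) q k * qpoch (q/c) q k * qpoch (q/d) q k * qpoch (q/e) q k
     / (qpoch a q k * qpoch (b*q) q k * qpoch (c*q) q k * qpoch (d*q) q k * qpoch (e*q) q k)
     * (a*b*c*d*e/q) powi k"

definition vwp_series_term :: "complex \<Rightarrow> complex \<Rightarrow> complex \<Rightarrow> complex \<Rightarrow> complex \<Rightarrow> complex \<Rightarrow> nat \<Rightarrow> complex" where
  "vwp_series_term q a b c d e m = (1 - q^(2*m+1)) * (a*b*c*d*e/q)^m
     * (qpoch_nat (q/a) q m * qpoch_nat (q/b) q m * qpoch_nat (q/c) q m * qpoch_nat (q/d) q m * qpoch_nat (q/e) q m)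
     / (qpoch_nat (a*q) q m * qpoch_nat (b*q) q m * qpoch_nat (c*q) q m * qpoch_nat (d*q) q m * qpoch_nat (e*q) q m)"

lemma bilateral_term_of_nat:
  "bilateral_term q a b c d e (int m) =
     qpoch_nat (q/a) q m * qpoch_nat (q/b) q m * qpoch_nat (q/c) q m * qpoch_nat (q/d) q m * qpoch_nat (q/e) q m
     / (qpoch_nat a q m * qpoch_nat (b*q) q m * qpoch_nat (c*q) q m * qpoch_nat (d*q) q m * qpoch_nat (e*q) q m)
     * (a*b*c*d*e/q)^m"
  by (simp add: bilateral_term_def qpoch_of_nat)

lemma bilateral_term_neg:
  assumes nz: "a \<noteq> 0" "b \<noteq> 0" "c \<noteq> 0" "d \<noteq> 0" "e \<noteq> 0" "q \<noteq> 0"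
  shows "bilateral_term q a b c d e (- int n) = (a*b*c*d*e)^n
     * (qpoch_nat (q/a) q n / qpoch_nat a q n) * (qpoch_nat (1/b) q n / qpoch_nat b q n)
     * (qpoch_nat (1/c) q n / qpoch_nat c q n) * (qpoch_nat (1/d) q n / qpoch_nat d q n)
     * (qpoch_nat (1/e) q n / qpoch_nat e q n)"
proof -
  define Q where "Q = (\<Prod>i<n. q ^ Suc i)"
  have "Q \<noteq> 0"
    using nz(6) by (simp add: Q_def)
  have ratio: "qpoch (q/w) q (- int n) / qpoch z q (- int n)
      = (z*w/q)^n * (qpoch_nat (q/z) q n / qpoch_nat w q n)"
    if "w \<noteq> 0" "z \<noteq> 0" for w z
  proof -
    have "qpoch (q/w) q (- int n) / qpoch z q (- int n)
        = (-z)^n / (-(q/w))^n * (qpoch_nat (q/z) q n / qpoch_nat w q n)"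
      using that nz(6) \<open>Q \<noteq> 0\<close> by (simp add: qpoch_neg Q_def[symmetric] divide_simps)
    also have "(-z)^n / (-(q/w))^n = (z*w/q)^n"
      using that nz(6) by (simp flip: power_divide)
    finally show ?thesis .
  qed
  have "a*a/q * (b*q*b/q) * (c*q*c/q) * (d*q*d/q) * (e*q*e/q) / (a*b*c*d*e/q) = a*b*c*d*e"
    using nz by (simp add: field_simps)
  then have signs: "(a*a/q)^n * (b*q*b/q)^n * (c*q*c/q)^n * (d*q*d/q)^n * (e*q*e/q)^n
      * inverse ((a*b*c*d*e/q)^n) = (a*b*c*d*e)^n"
    by (metis divide_inverse power_inverse power_mult_distrib)
  have "bilateral_term q a b c d e (- int n)
      = (qpoch (q/a) q (- int n) / qpoch a q (- int n)) * (qpoch (q/b) q (- int n) / qpoch (b*q) q (- int n))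
        * (qpoch (q/c) q (- int n) / qpoch (c*q) q (- int n)) * (qpoch (q/d) q (- int n) / qpoch (d*q) q (- int n))
        * (qpoch (q/e) q (- int n) / qpoch (e*q) q (- int n)) * inverse ((a*b*c*d*e/q)^n)"
    by (simp add: bilateral_term_def power_int_minus)
  also have "\<dots> = ((a*a/q)^n * (b*q*b/q)^n * (c*q*c/q)^n * (d*q*d/q)^n * (e*q*e/q)^n
        * inverse ((a*b*c*d*e/q)^n))
     * (qpoch_nat (q/a) q n / qpoch_nat a q n) * (qpoch_nat (q/(b*q)) q n / qpoch_nat b q n)
     * (qpoch_nat (q/(c*q)) q n / qpoch_nat c q n) * (qpoch_nat (q/(d*q)) q n / qpoch_nat d q n)
     * (qpoch_nat (q/(e*q)) q n / qpoch_nat e q n)"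
    using nz by (simp only: ratio mult_eq_0_iff simp_thms) (simp add: ac_simps)
  also have "\<dots> = (a*b*c*d*e)^n
     * (qpoch_nat (q/a) q n / qpoch_nat a q n) * (qpoch_nat (1/b) q n / qpoch_nat b q n)
     * (qpoch_nat (1/c) q n / qpoch_nat c q n) * (qpoch_nat (1/d) q n / qpoch_nat d q n)
     * (qpoch_nat (1/e) q n / qpoch_nat e q n)"
    unfolding signs using nz(6) by simp
  finally show ?thesis .
qed

lemma bilateral_term_neg_Suc:
  assumes nz: "a \<noteq> 0" "b \<noteq> 0" "c \<noteq> 0" "d \<noteq> 0" "e \<noteq> 0" "q \<noteq> 0"
    and ha: "\<And>i. a*q^i \<noteq> 1" and hw: "\<And>w i. w \<in> {b,c,d,e} \<Longrightarrow> w*q^i \<noteq> 1"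
  shows "bilateral_term q a b c d e (- int (Suc m))
       = (a*b*c*d*e)^m * (qpoch_nat (q/a) q m / qpoch_nat a q m)
         * (qpoch_nat (q/b) q m / qpoch_nat (b*q) q m * (qpoch_nat (q/c) q m / qpoch_nat (c*q) q m)
            * (qpoch_nat (q/d) q m / qpoch_nat (d*q) q m) * (qpoch_nat (q/e) q m / qpoch_nat (e*q) q m))
         * ((a - q*q^m) / (1 - a*q^m))"
proof -
  define A where "A = qpoch_nat (q/a) q m / qpoch_nat a q m"
  define R where "R w = qpoch_nat (q/w) q m / qpoch_nat (w*q) q m" for w
  have am: "1 - a*q^m \<noteq> 0"
    using ha[of m] by simp
  have inv: "qpoch_nat (1/w) q (Suc m) / qpoch_nat w q (Suc m) = -(1/w) * R w"
    if "w \<in> {b,c,d,e}" for w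
  proof -
    have "w \<noteq> 0" "w \<noteq> 1"
      using that nz hw[OF that, of 0] by auto
    moreover have "qpoch_nat (w*q) q m \<noteq> 0"
      by (rule qpoch_nat_shift_nonzero) (rule hw[OF that])
    ultimately show ?thesis
      by (simp add: R_def qpoch_nat_Suc_shift field_simps)
  qed
  have ra: "qpoch_nat (q/a) q (Suc m) / qpoch_nat a q (Suc m) = A * ((a - q*q^m) / (a * (1 - a*q^m)))"
    using nz(1) by (simp add: A_def qpoch_nat_Suc field_simps)
  have "bilateral_term q a b c d e (- int (Suc m))
      = (a*b*c*d*e)^Suc m * (A * ((a - q*q^m) / (a * (1 - a*q^m))))
        * (-(1/b) * R b) * (-(1/c) * R c) * (-(1/d) * R d) * (-(1/e) * R e)"
    unfolding bilateral_term_neg[OF nz] ra by (simp only: inv insert_iff simp_thms)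
  also have "\<dots> = (a*b*c*d*e)^m * A * (R b * R c * R d * R e) * ((a - q*q^m) / (1 - a*q^m))"
    using nz am by (simp add: field_simps)
  finally show ?thesis
    unfolding A_def R_def .
qed

lemma bilateral_term_pair:
  assumes nz: "a \<noteq> 0" "b \<noteq> 0" "c \<noteq> 0" "d \<noteq> 0" "e \<noteq> 0" "q \<noteq> 0"
    and ha: "\<And>i. a*q^i \<noteq> 1" and hw: "\<And>w i. w \<in> {b,c,d,e} \<Longrightarrow> w*q^i \<noteq> 1"
  shows "bilateral_term q a b c d e (int m) + bilateral_term q a b c d e (- int (Suc m))
       = vwp_series_term q a b c d e m / (1 - a)"
proof -
  define Z where "Z = (a*b*c*d*e)^m"
  define A where "A = qpoch_nat (q/a) q m / qpoch_nat a q m"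
  define R where "R w = qpoch_nat (q/w) q m / qpoch_nat (w*q) q m" for w
  have am: "1 - a*q^m \<noteq> 0"
    using ha[of m] by simp
  have neg: "bilateral_term q a b c d e (- int (Suc m))
      = Z * A * (R b * R c * R d * R e) * ((a - q*q^m) / (1 - a*q^m))"
    unfolding Z_def A_def R_def by (rule bilateral_term_neg_Suc[OF nz ha hw])
  have pos: "bilateral_term q a b c d e (int m) = Z * A * (R b * R c * R d * R e) / q^m"
    by (simp add: bilateral_term_of_nat Z_def A_def R_def power_divide mult_ac)
  have pw: "1 - q^(2*m+1) = 1 - q*(q^m)^2"
    by (simp add: power_mult power2_eq_square mult_ac flip: power_mult_distrib)
  have "vwp_series_term q a b c d e m / (1 - a)
      = (1 - q^(2*m+1)) / q^m * Z * (qpoch_nat (q/a) q m / qpoch_nat (a*q) q m / (1 - a))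
        * (R b * R c * R d * R e)"
    by (simp add: vwp_series_term_def Z_def R_def power_divide mult_ac)
  also have "qpoch_nat (q/a) q m / qpoch_nat (a*q) q m / (1 - a) = A / (1 - a*q^m)"
    using qpoch_nat_mult_q[of a q m] by (simp add: A_def mult.commute)
  also have "(1 - q^(2*m+1)) / q^m * Z * (A / (1 - a*q^m)) * (R b * R c * R d * R e)
      = Z * A * (R b * R c * R d * R e) / q^m
        + Z * A * (R b * R c * R d * R e) * ((a - q*q^m) / (1 - a*q^m))"
    unfolding pw using am nz(6) by (simp add: field_simps power2_eq_square)
  finally show ?thesis
    unfolding pos neg ..
qed

lemma sum_symmetric_int_interval:
  fixes f :: "int \<Rightarrow> 'a::comm_monoid_add"
  shows "(\<Sum>k\<in>{- int (Suc N)..int N}. f k) = (\<Sum>m\<le>N. f (int m) + f (- int (Suc m)))"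
proof (induction N)
  case 0
  have "{- 1..0::int} = {0, -1}" by auto
  then show ?case by (simp add: add.commute)
next
  case (Suc N)
  have "{- int (Suc (Suc N))..int (Suc N)} = insert (int (Suc N)) (insert (- int (Suc (Suc N))) {- int (Suc N)..int N})"
    by auto
  then show ?case
    using Suc by (simp add: add_ac)
qed

lemma bilateral_term_eq_0:
  assumes nz: "a \<noteq> 0" "b \<noteq> 0" "c \<noteq> 0" "d \<noteq> 0" "e \<noteq> 0" "q \<noteq> 0"
    and "a = q^Suc N \<or> b = q^Suc N \<or> c = q^Suc N" and "k \<notin> {- int (Suc N)..int N}"
  shows "bilateral_term q a b c d e k = 0"
proof (cases "0 \<le> k")
  case True
  define n where "n = nat k"
  have "k = int n" "N < n"
    using True assms(8) by (auto simp: n_def)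
  moreover have "qpoch_nat (q/a) q n * qpoch_nat (q/b) q n * qpoch_nat (q/c) q n = 0"
    using assms(7) \<open>N < n\<close> nz(6) by (auto simp: qpoch_nat_terminates)
  ultimately show ?thesis
    by (simp add: bilateral_term_of_nat)
next
  case False
  define n where "n = nat (- k) - 1"
  have k: "k = - int (Suc n)" and "N < n"
    using False assms(8) by (auto simp: n_def)
  have "qpoch_nat (q/a) q (Suc n) * qpoch_nat (1/b) q (Suc n) * qpoch_nat (1/c) q (Suc n) = 0"
    using assms(7) \<open>N < n\<close> nz(6) qpoch_nat_terminates[OF nz(6), of "Suc N" "Suc n"]
    by (auto simp: qpoch_nat_terminates)
  then show ?thesis
    unfolding k bilateral_term_neg[OF nz] by auto
qed

lemma bilateral_has_sum:
  assumes nz: "a \<noteq> 0" "b \<noteq> 0" "c \<noteq> 0" "d \<noteq> 0" "e \<noteq> 0" "q \<noteq> 0"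
    and ha: "\<And>i. a*q^i \<noteq> 1" and hw: "\<And>w i. w \<in> {b,c,d,e} \<Longrightarrow> w*q^i \<noteq> 1"
    and "a = q^Suc N \<or> b = q^Suc N \<or> c = q^Suc N"
  shows "(bilateral_term q a b c d e has_sum (\<Sum>m\<le>N. vwp_series_term q a b c d e m / (1 - a))) UNIV"
proof (rule has_sum_finite_neutralI[where B = "{- int (Suc N)..int N}"])
  show "(\<Sum>m\<le>N. vwp_series_term q a b c d e m / (1 - a)) = (\<Sum>k\<in>{- int (Suc N)..int N}. bilateral_term q a b c d e k)"
    unfolding sum_symmetric_int_interval
    by (rule sum.cong[OF refl], rule bilateral_term_pair[OF nz ha hw, symmetric])
qed (use bilateral_term_eq_0[OF nz assms(9)] in auto)

definition balanced_term :: "complex \<Rightarrow> complex \<Rightarrow> complex \<Rightarrow> complex \<Rightarrow> complex \<Rightarrow> complex \<Rightarrow> nat \<Rightarrow> complex" where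
  "balanced_term q a b c d e k =
     qpoch_nat (q/a) q k * qpoch_nat (q/b) q k * qpoch_nat (q/c) q k * qpoch_nat (d*e) q k
     / (qpoch_nat q q k * qpoch_nat (q^2/(a*b*c)) q k * qpoch_nat (d*q) q k * qpoch_nat (e*q) q k) * q^k"

lemma vwp_series_term_terminating:
  assumes "q \<noteq> 0" "a = q^Suc N"
  shows "vwp_series_term q a b c d e m
       = (1 - q^(2*m+1)) * wp_terminating q N m * wp_pair q b c m * wp_pair q d e m"
proof -
  have "(a*b*c*d*e/q)^m = q^(N*m) * (b*c)^m * (d*e)^m"
    using assms by (simp add: power_mult_distrib power_mult mult_ac)
  moreover have "q/a = 1/q^N" "a*q = q^(N+2)"
    using assms by simp_all
  ultimately show ?thesis
    unfolding vwp_series_term_def wp_terminating_def wp_pair_def by (simp only:) (simp add: mult_ac)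
qed

theorem watson_terminating:
  assumes nq: "0 < norm q" "norm q < 1" and nz: "b \<noteq> 0" "c \<noteq> 0" "d \<noteq> 0" "e \<noteq> 0"
    and aN: "a = q^Suc N" and hw: "\<And>w i. w \<in> {b,c,d,e} \<Longrightarrow> w*q^(Suc i) \<noteq> 1"
    and h2: "\<And>i. q^2/(a*b*c) * q^i \<noteq> 1" and hinf: "qpinf (a*b*c/q) q \<noteq> 0"
  shows "(\<Sum>m\<le>N. vwp_series_term q a b c d e m) = watson_factor q a b c * (\<Sum>k\<le>N. balanced_term q a b c d e k)"
proof -
  have q: "admissible_base q" using nq by (rule admissible_base_if_norm)
  have q0: "q \<noteq> 0" using q by (rule admissible_base_nonzero)
  have q2: "q^2/(a*b*c) = q/(q^N*b*c)"
    using q0 by (simp add: aN power2_eq_square field_simps)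
  have hbc: "b*c*q^N \<noteq> q^(Suc i)" for i
  proof
    assume "b*c*q^N = q^(Suc i)"
    then have "q^2/(a*b*c) * q^i = 1"
      using q0 nz unfolding q2 by (simp add: field_simps)
    with h2 show False by blast
  qed
  have hb: "\<And>i. b*q^(Suc i) \<noteq> 1" and hc: "\<And>i. c*q^(Suc i) \<noteq> 1"
    and hd: "\<And>i. d*q^(Suc i) \<noteq> 1" and he: "\<And>i. e*q^(Suc i) \<noteq> 1"
    using hw by simp_all
  have qa: "q/a = 1/q^N"
    using q0 by (simp add: aN)
  have "(\<Sum>m\<le>N. vwp_series_term q a b c d e m)
      = (\<Sum>m\<le>N. (1 - q^(2*m+1)) * wp_terminating q N m * wp_pair q b c m * wp_pair q d e m)"
    by (simp add: vwp_series_term_terminating[OF q0 aN])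
  also have "\<dots> = qpoch_nat q q (Suc N) * qpoch_nat (b*c) q N / (qpoch_nat (b*q) q N * qpoch_nat (c*q) q N)
         * (\<Sum>j\<le>N. qpoch_nat (1/q^N) q j * qpoch_nat (q/b) q j * qpoch_nat (q/c) q j * qpoch_nat (d*e) q j
              / (qpoch_nat q q j * qpoch_nat (q/(q^N*b*c)) q j * qpoch_nat (d*q) q j * qpoch_nat (e*q) q j) * q^j)"
    by (rule watson_transformation[OF q nz hb hc hd he hbc])
  also have "\<dots> = watson_factor q a b c * (\<Sum>k\<le>N. balanced_term q a b c d e k)"
    unfolding watson_factor_terminating[OF nq(2) q aN hb hc hinf] balanced_term_def q2 qa ..
  finally show ?thesis .
qed

lemma vwp_series_term_swap:
  "vwp_series_term q b a c d e = vwp_series_term q a b c d e"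
  "vwp_series_term q c b a d e = vwp_series_term q a b c d e"
  by (simp_all add: fun_eq_iff vwp_series_term_def ac_simps)

lemma balanced_term_swap:
  "balanced_term q b a c d e = balanced_term q a b c d e"
  "balanced_term q c b a d e = balanced_term q a b c d e"
  by (simp_all add: fun_eq_iff balanced_term_def ac_simps)

lemma watson_factor_swap:
  "watson_factor q b a c = watson_factor q a b c"
  "watson_factor q c b a = watson_factor q a b c"
  by (simp_all add: watson_factor_def ac_simps)

lemma watson_terminating_any:
  assumes nq: "0 < norm q" "norm q < 1" and nz: "a \<noteq> 0" "b \<noteq> 0" "c \<noteq> 0" "d \<noteq> 0" "e \<noteq> 0"
    and N: "a = q^Suc N \<or> b = q^Suc N \<or> c = q^Suc N"
    and hw: "\<And>w i. w \<in> {a,b,c,d,e} \<Longrightarrow> w*q^(Suc i) \<noteq> 1"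
    and h2: "\<And>i. q^2/(a*b*c) * q^i \<noteq> 1" and hinf: "qpinf (a*b*c/q) q \<noteq> 0"
  shows "(\<Sum>m\<le>N. vwp_series_term q a b c d e m) = watson_factor q a b c * (\<Sum>k\<le>N. balanced_term q a b c d e k)"
  using N
proof (elim disjE)
  assume "a = q^Suc N"
  then show ?thesis
    by (rule watson_terminating[OF nq nz(2-5) _ hw h2 hinf]) auto
next
  assume "b = q^Suc N"
  have "(\<Sum>m\<le>N. vwp_series_term q b a c d e m) = watson_factor q b a c * (\<Sum>k\<le>N. balanced_term q b a c d e k)"
    by (rule watson_terminating[OF nq nz(1,3,4,5) \<open>b = _\<close>]) (use hw h2 hinf in \<open>auto simp: ac_simps\<close>)
  then show ?thesis
    by (metis vwp_series_term_swap(1) balanced_term_swap(1) watson_factor_swap(1))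
next
  assume "c = q^Suc N"
  have "(\<Sum>m\<le>N. vwp_series_term q c b a d e m) = watson_factor q c b a * (\<Sum>k\<le>N. balanced_term q c b a d e k)"
    by (rule watson_terminating[OF nq nz(2,1,4,5) \<open>c = _\<close>]) (use hw h2 hinf in \<open>auto simp: ac_simps\<close>)
  then show ?thesis
    by (metis vwp_series_term_swap(2) balanced_term_swap(2) watson_factor_swap(2))
qed

theorem bilateral_sum_terminating:
  assumes hq: "0 < norm q" "norm q < 1" and nz: "a \<noteq> 0" "b \<noteq> 0" "c \<noteq> 0" "d \<noteq> 0" "e \<noteq> 0"
    and N: "a = q^Suc N \<or> b = q^Suc N \<or> c = q^Suc N"
    and ha: "\<And>i. a*q^i \<noteq> 1" and hw: "\<And>w i. w \<in> {b,c,d,e} \<Longrightarrow> w*q^i \<noteq> 1"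
    and h2: "\<And>i. q^2/(a*b*c) * q^i \<noteq> 1" and hinf: "qpinf (a*b*c/q) q \<noteq> 0"
  shows "summable (balanced_term q a b c d e)"
    and "(bilateral_term q a b c d e has_sum (watson_factor q a b c / (1 - a) * suminf (balanced_term q a b c d e))) UNIV"
proof -
  have q0: "q \<noteq> 0" using hq by auto
  have Sz: "balanced_term q a b c d e k = 0" if "k \<notin> {..N}" for k
    using N that q0 by (auto simp: balanced_term_def qpoch_nat_terminates)
  show "summable (balanced_term q a b c d e)"
    by (rule summable_finite[of "{..N}"]) (simp_all add: Sz)
  have suminf: "suminf (balanced_term q a b c d e) = (\<Sum>k\<le>N. balanced_term q a b c d e k)"
    by (rule suminf_finite) (simp_all add: Sz)
  have hw': "w*q^Suc i \<noteq> 1" if "w \<in> {a,b,c,d,e}" for w i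
    using that ha[of "Suc i"] hw[of _ "Suc i"] by blast
  have W: "(\<Sum>m\<le>N. vwp_series_term q a b c d e m)
      = watson_factor q a b c * (\<Sum>k\<le>N. balanced_term q a b c d e k)"
    by (rule watson_terminating_any[OF hq nz N hw']) (use h2 hinf in auto)
  have "(\<Sum>m\<le>N. vwp_series_term q a b c d e m / (1 - a))
      = watson_factor q a b c / (1 - a) * suminf (balanced_term q a b c d e)"
    unfolding sum_divide_distrib[symmetric] W suminf by simp
  with bilateral_has_sum[OF nz q0 ha hw N]
  show "(bilateral_term q a b c d e has_sum (watson_factor q a b c / (1 - a) * suminf (balanced_term q a b c d e))) UNIV"
    by simp
qed

theorem mainTheorem6:
  fixes q a b c d e :: complex
  assumes hq: "0 < norm q" "norm q < 1"
    and hnz: "a \<noteq> 0" "b \<noteq> 0" "c \<noteq> 0" "d \<noteq> 0" "e \<noteq> 0"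
    and hqn: "\<exists>n::nat. 1 \<le> n \<and> (a = q ^ n \<or> b = q ^ n \<or> c = q ^ n)"
    and hnum: "\<forall>x\<in>{q/a, q/b, q/c, q/d, q/e}. \<forall>i::nat. 1 \<le> i \<longrightarrow> x / q ^ i \<noteq> 1"
    and hden: "\<forall>x\<in>{a, b*q, c*q, d*q, e*q}. \<forall>i::nat. x * q ^ i \<noteq> 1"
    and hden2: "\<forall>i::nat. (q^2 / (a*b*c)) * q ^ i \<noteq> 1"
    and hinf: "qpinf (a*b*c/q) q \<noteq> 0"
  shows "summable (\<lambda>k::nat.
            qpoch (q/a) q k * qpoch (q/b) q k * qpoch (q/c) q k * qpoch (d*e) q k
            / (qpoch q q k * qpoch (q^2/(a*b*c)) q k * qpoch (d*q) q k * qpoch (e*q) q k)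
            * q ^ k)
       \<and> ((\<lambda>k::int.
            qpoch (q/a) q k * qpoch (q/b) q k * qpoch (q/c) q k * qpoch (q/d) q k * qpoch (q/e) q k
            / (qpoch a q k * qpoch (b*q) q k * qpoch (c*q) q k * qpoch (d*q) q k * qpoch (e*q) q k)
            * (a*b*c*d*e/q) powi k)
          has_sum
           (qpinf q q * qpinf (a*b) q * qpinf (b*c) q * qpinf (a*c) q
            / (qpinf a q * qpinf (b*q) q * qpinf (c*q) q * qpinf (a*b*c/q) q)
            * (\<Sum>k::nat.
               qpoch (q/a) q k * qpoch (q/b) q k * qpoch (q/c) q k * qpoch (d*e) q k
               / (qpoch q q k * qpoch (q^2/(a*b*c)) q k * qpoch (d*q) q k * qpoch (e*q) q k)
               * q ^ k))) UNIV"
proof -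
  have q0: "q \<noteq> 0" using hq by auto
  have ha: "a*q^i \<noteq> 1" for i
    using hden by simp
  have hw: "w*q^i \<noteq> 1" if "w \<in> {b,c,d,e}" for w i
  proof (cases i)
    case 0
    have "(q/w) / q^1 \<noteq> 1"
      using hnum that by blast
    with 0 q0 show ?thesis by auto
  next
    case (Suc j)
    then show ?thesis
      using hden that by (auto simp: mult.assoc)
  qed
  obtain n where n: "1 \<le> n" "a = q^n \<or> b = q^n \<or> c = q^n"
    using hqn by blast
  then have N: "a = q^Suc (n - 1) \<or> b = q^Suc (n - 1) \<or> c = q^Suc (n - 1)"
    by simp
  have "watson_factor q a b c / (1 - a) = qpinf q q * qpinf (a*b) q * qpinf (b*c) q * qpinf (a*c) q
      / (qpinf a q * qpinf (b*q) q * qpinf (c*q) q * qpinf (a*b*c/q) q)"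
    using qpinf_split[OF hq(2), of a 1] by (simp add: watson_factor_def qpoch_nat_Suc mult_ac)
  with bilateral_sum_terminating[OF hq hnz N ha hw hden2[rule_format] hinf] show ?thesis
    by (simp add: balanced_term_def[abs_def] bilateral_term_def[abs_def] qpoch_of_nat)
qed

end
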